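(* Let $\alpha,\beta\in\mathbb{R}$ and $\eta\in\{1,-1\}$, and let $G_4$ be the connected, simply connected Lie group whose Lie algebra $\mathfrak{g}_4$ has a basis $\{e_1,e_2,e_3\}$ with $[e_1,e_2]=-e_2+(2\eta-\beta)e_3$, $[e_1,e_3]=-\beta e_2+e_3$, $[e_2,e_3]=\alpha e_1$, equipped with the left-invariant Lorentzian metric $g$ for which $\{e_1,e_2,e_3\}$ is pseudo-orthonormal with $e_3$ timelike, and with the product structure $J$. Let $\lambda_0,c\in\mathbb{R}$. Then there exists a derivation $D$ of $\mathfrak{g}_4$ with $\widetilde{\mathrm{Ric}}^0=(s^0\lambda_0+c)\mathrm{Id}+D$ (i.e. $(G_4,g,J)$ is an algebraic Schouten soliton associated to the canonical connection $\nabla^0$) if and only if $\alpha=0$, $\beta=\eta$ and $c=0$.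
   Context: Pseudo-orthonormal means $g(e_1,e_1)=g(e_2,e_2)=1$, $g(e_3,e_3)=-1$, $g(e_i,e_j)=0$ for $i\neq j$; left-invariant tensors are identified with their values on $\mathfrak{g}$. $\nabla$ is the Levi-Civita connection of $g$. The product structure $J$ is the left-invariant endomorphism with $Je_1=e_1$, $Je_2=e_2$, $Je_3=-e_3$. The canonical connection is $\nabla^0_XY=\nabla_XY-\frac12(\nabla_XJ)JY$, and the Kobayashi–Nomizu connection is $\nabla^1_XY=\nabla^0_XY-\frac14[(\nabla_YJ)JX-(\nabla_{JY}J)X]$. For $k=0,1$: $R^k(X,Y)Z=\nabla^k_X\nabla^k_YZ-\nabla^k_Y\nabla^k_XZ-\nabla^k_{[X,Y]}Z$; $\rho^k(X,Y)=-g(R^k(X,e_1)Y,e_1)-g(R^k(X,e_2)Y,e_2)+g(R^k(X,e_3)Y,e_3)$; $\widetilde\rho^k(X,Y)=\frac12(\rho^k(X,Y)+\rho^k(Y,X))$; $\widetilde{\mathrm{Ric}}^k$ is defined by $\widetilde\rho^k(X,Y)=g(\widetilde{\mathrm{Ric}}^k(X),Y)$; and $s^k=\widetilde\rho^k(e_1,e_1)+\widetilde\rho^k(e_2,e_2)-\widetilde\rho^k(e_3,e_3)$. A derivation of $\mathfrak{g}$ is a linear map $D$ with $D[X,Y]=[DX,Y]+[X,DY]$. $(G,g,J)$ is an algebraic Schouten soliton associated to $\nabla^k$ (with real constants $\lambda_0,c$) if $\widetilde{\mathrm{Ric}}^k=(s^k\lambda_0+c)\mathrm{Id}+D$ for some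 derivation $D$. *)

theory Defs
  imports "HOL-Analysis.Analysis"
begin

text \<open>A Lie bracket is a
function br :: real^3 => real^3 => real^3. All left-invariant tensors are
identified with their values on the Lie algebra.\<close>

type_synonym vec3 = "real^3"
type_synonym bracket = "vec3 \<Rightarrow> vec3 \<Rightarrow> vec3"

definition ebas :: "3 \<Rightarrow> vec3" where
  "ebas i = axis i 1"

definition gL :: "vec3 \<Rightarrow> vec3 \<Rightarrow> real" where
  "gL x y = x$1 * y$1 + x$2 * y$2 - x$3 * y$3"

definition eps :: "3 \<Rightarrow> real" where
  "eps i = (if i = 3 then -1 else 1)"

text \<open>Levi-Civita connection on left-invariant fields (Koszul formula):
  2 g(nabla_X Y, Z) = g([X,Y],Z) - g([Y,Z],X) + g([Z,X],Y).\<close>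
definition LC :: "bracket \<Rightarrow> vec3 \<Rightarrow> vec3 \<Rightarrow> vec3" where
  "LC br X Y = (\<Sum>k\<in>UNIV. (eps k * ((gL (br X Y) (ebas k) - gL (br Y (ebas k)) X
                 + gL (br (ebas k) X) Y) / 2)) *\<^sub>R ebas k)"

definition prodJ :: "vec3 \<Rightarrow> vec3" where
  "prodJ x = vector [x$1, x$2, - x$3]"

definition covJ :: "bracket \<Rightarrow> vec3 \<Rightarrow> vec3 \<Rightarrow> vec3" where
  "covJ br X Y = LC br X (prodJ Y) - prodJ (LC br X Y)"

definition can0 :: "bracket \<Rightarrow> vec3 \<Rightarrow> vec3 \<Rightarrow> vec3" where
  "can0 br X Y = LC br X Y - (1/2) *\<^sub>R covJ br X (prodJ Y)"

definition curv0 :: "bracket \<Rightarrow> vec3 \<Rightarrow> vec3 \<Rightarrow> vec3 \<Rightarrow> vec3" where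
  "curv0 br X Y Z = can0 br X (can0 br Y Z) - can0 br Y (can0 br X Z) - can0 br (br X Y) Z"

definition rho0 :: "bracket \<Rightarrow> vec3 \<Rightarrow> vec3 \<Rightarrow> real" where
  "rho0 br X Y = - gL (curv0 br X (ebas 1) Y) (ebas 1) - gL (curv0 br X (ebas 2) Y) (ebas 2)
                 + gL (curv0 br X (ebas 3) Y) (ebas 3)"

definition rhoS0 :: "bracket \<Rightarrow> vec3 \<Rightarrow> vec3 \<Rightarrow> real" where
  "rhoS0 br X Y = (rho0 br X Y + rho0 br Y X) / 2"

text \<open>Symmetrized Ricci operator: g(RicS0 X, Y) = rhoS0 X Y.\<close>
definition RicS0 :: "bracket \<Rightarrow> vec3 \<Rightarrow> vec3" where
  "RicS0 br X = (\<Sum>k\<in>UNIV. (eps k * rhoS0 br X (ebas k)) *\<^sub>R ebas k)"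

definition scal0 :: "bracket \<Rightarrow> real" where
  "scal0 br = rhoS0 br (ebas 1) (ebas 1) + rhoS0 br (ebas 2) (ebas 2) - rhoS0 br (ebas 3) (ebas 3)"

definition is_derivation :: "bracket \<Rightarrow> (vec3 \<Rightarrow> vec3) \<Rightarrow> bool" where
  "is_derivation br D \<longleftrightarrow> linear D \<and> (\<forall>X Y. D (br X Y) = br (D X) Y + br X (D Y))"

definition alg_schouten_soliton0 :: "bracket \<Rightarrow> real \<Rightarrow> real \<Rightarrow> bool" where
  "alg_schouten_soliton0 br lam0 c \<longleftrightarrow>
     (\<exists>D. is_derivation br D \<and> (\<forall>X. RicS0 br X = (scal0 br * lam0 + c) *\<^sub>R X + D X))"

definition br4 :: "real \<Rightarrow> real \<Rightarrow> real \<Rightarrow> bracket" where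
  "br4 \<alpha> \<beta> \<eta> X Y =
     (X$1 * Y$2 - X$2 * Y$1) *\<^sub>R vector [0, -1, 2*\<eta> - \<beta>]
   + (X$1 * Y$3 - X$3 * Y$1) *\<^sub>R vector [0, -\<beta>, 1]
   + (X$2 * Y$3 - X$3 * Y$2) *\<^sub>R vector [\<alpha>, 0, 0]"

end

theory Submission
  imports Defs
begin

text \<open>The canonical connection of \<open>g\<^sub>4\<close> is \<open>\<nabla>\<^sup>0\<^sub>X = \<omega>(X) R\<close>, where \<open>R\<close> is
the rotation \<open>e\<^sub>1 \<mapsto> e\<^sub>2, e\<^sub>2 \<mapsto> -e\<^sub>1, e\<^sub>3 \<mapsto> 0\<close> and \<open>\<omega> = e\<^sup>2 + (\<eta> + \<alpha>/2) e\<^sup>3\<close> in the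
dual basis. Hence \<open>R\<^sup>0(X,Y) = -\<omega>([X,Y]) R\<close>, and the symmetrised Ricci operator
has just two coefficients: \<open>r\<close> on \<open>e\<^sub>1, e\<^sub>2\<close> and \<open>q\<close> coupling \<open>e\<^sub>2, e\<^sub>3\<close>. Being a
soliton means that \<open>Ric\<^sup>0 - k Id\<close> with \<open>k = s\<^sup>0\<lambda>\<^sub>0 + c\<close> is a derivation; testing
this on the brackets of basis vectors gives polynomial equations which, as
\<open>\<eta>\<^sup>2 = 1\<close>, force \<open>\<alpha> = 0\<close>, \<open>\<beta> = \<eta>\<close> and \<open>k = 0\<close>. Then \<open>Ric\<^sup>0 = 0\<close>, so \<open>s\<^sup>0 = 0\<close>
and \<open>c = k = 0\<close>; conversely, in that case the zero derivation works.\<close>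

lemma alg_schouten_soliton0_iff_derivation:
  "alg_schouten_soliton0 br lam0 c \<longleftrightarrow>
     is_derivation br (\<lambda>X. RicS0 br X - (scal0 br * lam0 + c) *\<^sub>R X)"
  unfolding alg_schouten_soliton0_def
  by (metis (no_types, lifting) add_diff_cancel_left' diff_add_cancel ext)

lemma ebas_nth [simp]: "ebas i $ j = (if i = j then 1 else 0)"
  by (simp add: ebas_def axis_def)

lemma eps_simps [simp]: "eps 1 = 1" "eps 2 = 1" "eps 3 = -1"
  by (simp_all add: eps_def)

lemma br4_eq:
  "br4 a b h X Y = vector [a * (X$2 * Y$3 - X$3 * Y$2),
     - (X$1 * Y$2 - X$2 * Y$1) - b * (X$1 * Y$3 - X$3 * Y$1),
     (2*h - b) * (X$1 * Y$2 - X$2 * Y$1) + (X$1 * Y$3 - X$3 * Y$1)]"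
  by (simp add: br4_def vec_eq_iff forall_3 algebra_simps)

lemma LC_nth:
  "LC br X Y $ i = eps i * ((gL (br X Y) (ebas i) - gL (br Y (ebas i)) X
     + gL (br (ebas i) X) Y) / 2)"
  by (simp add: LC_def sum_component if_distrib[of "\<lambda>t. _ * t"] cong: if_cong)

lemma can0_br4:
  "can0 (br4 a b h) X Y = (X$2 + (h + a/2) * X$3) *\<^sub>R vector [- Y$2, Y$1, 0]"
  by (simp add: can0_def covJ_def prodJ_def vec_eq_iff forall_3 LC_nth br4_eq gL_def
      algebra_simps field_simps)

lemma curv0_br4:
  "curv0 (br4 a b h) X Y Z =
     - (br4 a b h X Y $ 2 + (h + a/2) * br4 a b h X Y $ 3) *\<^sub>R vector [- Z$2, Z$1, 0]"
  by (simp add: curv0_def can0_br4 br4_eq vec_eq_iff forall_3 algebra_simps field_simps)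

definition ric_diag4 :: "real \<Rightarrow> real \<Rightarrow> real \<Rightarrow> real" where
  "ric_diag4 a b h = -1 + 2*h^2 - b*h + a*h - a*b/2"

definition ric_off4 :: "real \<Rightarrow> real \<Rightarrow> real \<Rightarrow> real" where
  "ric_off4 a b h = (b - h)/2 - a/4"

lemma rhoS0_br4:
  "rhoS0 (br4 a b h) X Y =
     ric_diag4 a b h * (X$1 * Y$1 + X$2 * Y$2) - ric_off4 a b h * (X$2 * Y$3 + X$3 * Y$2)"
  by (simp add: rhoS0_def rho0_def curv0_br4 br4_eq gL_def ric_diag4_def ric_off4_def
      power2_eq_square algebra_simps field_simps)

lemma RicS0_br4:
  "RicS0 (br4 a b h) X = vector [ric_diag4 a b h * X$1,
     ric_diag4 a b h * X$2 - ric_off4 a b h * X$3, ric_off4 a b h * X$2]"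
  by (simp add: RicS0_def rhoS0_br4 vec_eq_iff forall_3 sum_3 algebra_simps)

lemma scal0_br4: "scal0 (br4 a b h) = 2 * ric_diag4 a b h"
  by (simp add: scal0_def rhoS0_br4)

lemma derivation_shifted_RicS0_br4:
  assumes "is_derivation (br4 a b h) (\<lambda>X. RicS0 (br4 a b h) X - k *\<^sub>R X)"
  shows "a * k = 0"
    and "ric_diag4 a b h - k = 2 * ric_off4 a b h * (h - b)"
    and "k * b = - 2 * ric_off4 a b h"
proof -
  define D where "D = (\<lambda>X. RicS0 (br4 a b h) X - k *\<^sub>R X)"
  have der: "D (br4 a b h X Y) = br4 a b h (D X) Y + br4 a b h X (D Y)" for X Y
    using assms unfolding is_derivation_def D_def by blast
  from der[of "ebas 1" "ebas 2"] der[of "ebas 1" "ebas 3"] der[of "ebas 2" "ebas 3"]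
  show "a * k = 0" "ric_diag4 a b h - k = 2 * ric_off4 a b h * (h - b)"
    "k * b = - 2 * ric_off4 a b h"
    unfolding D_def RicS0_br4 br4_eq vec_eq_iff forall_3
    by (simp_all add: algebra_simps field_simps)
qed

lemma ric_diag4_off4_zero:
  assumes "h^2 = 1"
  shows "ric_diag4 0 h h = 0" and "ric_off4 0 h h = 0"
  using assms by (simp_all add: ric_diag4_def ric_off4_def power2_eq_square)

lemma shifted_RicS0_derivation_equations_solve:
  fixes a b h k :: real
  assumes h: "h^2 = 1"
    and E1: "a * k = 0"
    and E2: "ric_diag4 a b h - k = 2 * ric_off4 a b h * (h - b)"
    and E3: "k * b = - 2 * ric_off4 a b h"
  shows "a = 0 \<and> b = h \<and> k = 0"
proof -
  have a0: "a = 0"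
  proof (rule ccontr)
    assume "a \<noteq> 0"
    with E1 E3 have "ric_off4 a b h = 0" by simp
    with E1 E2 \<open>a \<noteq> 0\<close> have "ric_diag4 a b h = 0" and a: "a = 2 * (b - h)"
      by (simp_all add: ric_off4_def)
    moreover have "ric_diag4 a b h = - ((b - h)^2)"
      using h unfolding a ric_diag4_def by algebra
    ultimately show False
      using \<open>a \<noteq> 0\<close> by simp
  qed
  have k: "k = (b - h) * (b - 2*h)"
    using E2 h by (simp add: a0 ric_diag4_def ric_off4_def power2_eq_square algebra_simps)
  have "(b - h)^3 = 0"
    using E3 h by (simp add: k a0 ric_off4_def power2_eq_square power3_eq_cube algebra_simps)
  then have "b = h"
    by simp
  with a0 k show ?thesis
    by simp
qed

lemma derivation_shifted_RicS0_br4_iff: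
  assumes "h^2 = 1"
  shows "is_derivation (br4 a b h) (\<lambda>X. RicS0 (br4 a b h) X - k *\<^sub>R X) \<longleftrightarrow>
           a = 0 \<and> b = h \<and> k = 0"
proof
  assume "is_derivation (br4 a b h) (\<lambda>X. RicS0 (br4 a b h) X - k *\<^sub>R X)"
  then show "a = 0 \<and> b = h \<and> k = 0"
    using assms shifted_RicS0_derivation_equations_solve derivation_shifted_RicS0_br4
    by blast
next
  assume "a = 0 \<and> b = h \<and> k = 0"
  moreover have "RicS0 (br4 0 h h) X = 0" for X
    using ric_diag4_off4_zero[OF assms] by (simp add: RicS0_br4 vec_eq_iff forall_3)
  moreover have "br4 0 h h 0 Y = 0" "br4 0 h h X 0 = 0" for X Y
    by (simp_all add: br4_def)
  ultimately show "is_derivation (br4 a b h) (\<lambda>X. RicS0 (br4 a b h) X - k *\<^sub>R X)"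
    by (simp add: is_derivation_def linear_zero)
qed

theorem theorem4p8:
  fixes \<alpha> \<beta> \<eta> lam0 c :: real
  assumes "\<eta> = 1 \<or> \<eta> = -1"
  shows "alg_schouten_soliton0 (br4 \<alpha> \<beta> \<eta>) lam0 c \<longleftrightarrow> (\<alpha> = 0 \<and> \<beta> = \<eta> \<and> c = 0)"
proof -
  have \<eta>: "\<eta>^2 = 1"
    using assms by auto
  have "alg_schouten_soliton0 (br4 \<alpha> \<beta> \<eta>) lam0 c \<longleftrightarrow>
          \<alpha> = 0 \<and> \<beta> = \<eta> \<and> scal0 (br4 \<alpha> \<beta> \<eta>) * lam0 + c = 0"
    by (simp add: alg_schouten_soliton0_iff_derivation derivation_shifted_RicS0_br4_iff[OF \<eta>])
  also have "\<dots> \<longleftrightarrow> \<alpha> = 0 \<and> \<beta> = \<eta> \<and> c = 0"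
    using ric_diag4_off4_zero[OF \<eta>] by (auto simp: scal0_br4)
  finally show ?thesis .
qed

end
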